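(* For each integer $n > 0$, the space $\operatorname{span}\{f_1 f_2 \cdots f_n : f_i \in C_c(G_1) \text{ for all } i\}$ (convolution products) is dense in $C_c(G_n)$ (in the inductive limit / uniform sense given by Stone–Weierstrass, in particular in the $C^*_r(G)$-norm), and $C_c(G_n)^* = C_c(G_{-n})$.
   Context: Throughout, $G$ is a second-countable locally compact Hausdorff étale groupoid and $c : G \to \mathbb{Z}$ is a continuous cocycle which is unperforated: whenever $c(\gamma)=n>0$ there exist composable $\gamma_1,\dots,\gamma_n$ with $c(\gamma_i)=1$ and $\gamma=\gamma_1\cdots\gamma_n$. For $n \in \mathbb{Z}$, $G_n := c^{-1}(n)$ (a clopen subset of $G$), and $C_c(G_n)$ denotes compactly supported continuous functions on $G$ supported in $G_n$. The involution is $f^*(\gamma)=\overline{f(\gamma^{-1})}$. *)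

theory Defs
  imports "HOL-Analysis.Analysis"
begin

text \<open>An etale groupoid whose underlying set is the whole type 'g. Composable pairs are
  (g,h) with s g = r h; the product is m g h; the inverse is iv.\<close>

definition etale_groupoid ::
  "('g::{t2_space,second_countable_topology} \<Rightarrow> 'g) \<Rightarrow> ('g \<Rightarrow> 'g) \<Rightarrow> ('g \<Rightarrow> 'g \<Rightarrow> 'g) \<Rightarrow> ('g \<Rightarrow> 'g) \<Rightarrow> bool"
  where "etale_groupoid r s m iv \<longleftrightarrow>
    \<comment> \<open>algebraic groupoid axioms\<close>
    (\<forall>g. r (r g) = r g \<and> s (r g) = r g \<and> r (s g) = s g \<and> s (s g) = s g) \<and>
    (\<forall>g h. s g = r h \<longrightarrow> r (m g h) = r g \<and> s (m g h) = s h) \<and>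
    (\<forall>g h k. s g = r h \<longrightarrow> s h = r k \<longrightarrow> m (m g h) k = m g (m h k)) \<and>
    (\<forall>g. m (r g) g = g \<and> m g (s g) = g) \<and>
    (\<forall>g. s (iv g) = r g \<and> r (iv g) = s g \<and> m g (iv g) = r g \<and> m (iv g) g = s g) \<and>
    \<comment> \<open>topological axioms\<close>
    locally_compact_space (euclidean :: 'g topology) \<and>
    continuous_on {(g, h). s g = r h} (\<lambda>(g, h). m g h) \<and>
    continuous_on UNIV iv \<and>
    continuous_on UNIV r \<and> continuous_on UNIV s \<and>
    \<comment> \<open>etale: the range map is a local homeomorphism\<close>
    (\<forall>g. \<exists>U r'. open U \<and> g \<in> U \<and> open (r ` U) \<and> homeomorphism U (r ` U) r r')"

definition cocycle :: "('g \<Rightarrow> 'g) \<Rightarrow> ('g \<Rightarrow> 'g) \<Rightarrow> ('g \<Rightarrow> 'g \<Rightarrow> 'g) \<Rightarrow> ('g::topological_space \<Rightarrow> int) \<Rightarrow> bool"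
  where "cocycle r s m c \<longleftrightarrow> continuous_on UNIV c \<and>
     (\<forall>g h. s g = r h \<longrightarrow> c (m g h) = c g + c h)"

text \<open>Unperforated: every \<gamma> with c \<gamma> = n > 0 is a product \<gamma>1 \<cdots> \<gamma>n of composable
  elements of degree 1. Products are formed from the left; by associativity any bracketing agrees.\<close>
fun list_prod :: "('g \<Rightarrow> 'g \<Rightarrow> 'g) \<Rightarrow> 'g \<Rightarrow> 'g list \<Rightarrow> 'g" where
  "list_prod m a [] = a"
| "list_prod m a (b # bs) = list_prod m (m a b) bs"

fun composable_list :: "('g \<Rightarrow> 'g) \<Rightarrow> ('g \<Rightarrow> 'g) \<Rightarrow> 'g list \<Rightarrow> bool" where
  "composable_list r s [] = True"
| "composable_list r s [a] = True"
| "composable_list r s (a # b # bs) = (s a = r b \<and> composable_list r s (b # bs))"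

definition unperforated :: "('g \<Rightarrow> 'g) \<Rightarrow> ('g \<Rightarrow> 'g) \<Rightarrow> ('g \<Rightarrow> 'g \<Rightarrow> 'g) \<Rightarrow> ('g \<Rightarrow> int) \<Rightarrow> bool"
  where "unperforated r s m c \<longleftrightarrow>
    (\<forall>\<gamma> n. c \<gamma> = int n \<and> n > 0 \<longrightarrow>
       (\<exists>gs. length gs = n \<and> composable_list r s gs \<and> (\<forall>x\<in>set gs. c x = 1) \<and>
             \<gamma> = list_prod m (hd gs) (tl gs)))"

definition Cc_deg :: "('g::topological_space \<Rightarrow> int) \<Rightarrow> int \<Rightarrow> ('g \<Rightarrow> complex) set"
  where "Cc_deg c n = {f. continuous_on UNIV f \<and> compact (closure {x. f x \<noteq> 0}) \<and>
                          closure {x. f x \<noteq> 0} \<subseteq> c -` {n}}"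

definition conv :: "('g \<Rightarrow> 'g) \<Rightarrow> ('g \<Rightarrow> 'g \<Rightarrow> 'g) \<Rightarrow> ('g \<Rightarrow> 'g)
    \<Rightarrow> ('g \<Rightarrow> complex) \<Rightarrow> ('g \<Rightarrow> complex) \<Rightarrow> 'g \<Rightarrow> complex"
  where "conv r m iv f g \<gamma> = (\<Sum>\<alpha>\<in>{\<alpha>. r \<alpha> = r \<gamma> \<and> f \<alpha> \<noteq> 0}. f \<alpha> * g (m (iv \<alpha>) \<gamma>))"

fun conv_list :: "('g \<Rightarrow> 'g) \<Rightarrow> ('g \<Rightarrow> 'g \<Rightarrow> 'g) \<Rightarrow> ('g \<Rightarrow> 'g)
    \<Rightarrow> ('g \<Rightarrow> complex) list \<Rightarrow> 'g \<Rightarrow> complex" where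
  "conv_list r m iv [] = (\<lambda>_. 0)"
| "conv_list r m iv [f] = f"
| "conv_list r m iv (f # g # fs) = conv r m iv f (conv_list r m iv (g # fs))"

definition involution :: "('g \<Rightarrow> 'g) \<Rightarrow> ('g \<Rightarrow> complex) \<Rightarrow> 'g \<Rightarrow> complex"
  where "involution iv f \<gamma> = cnj (f (iv \<gamma>))"

definition prod_span :: "('g::topological_space \<Rightarrow> 'g) \<Rightarrow> ('g \<Rightarrow> 'g \<Rightarrow> 'g) \<Rightarrow> ('g \<Rightarrow> 'g)
    \<Rightarrow> ('g \<Rightarrow> int) \<Rightarrow> nat \<Rightarrow> ('g \<Rightarrow> complex) set"
  where "prod_span r m iv c n =
    {(\<lambda>\<gamma>. \<Sum>i<k. a i * conv_list r m iv (F i) \<gamma>) | (k::nat) (a::nat \<Rightarrow> complex) F.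
        \<forall>i<k. length (F i) = n \<and> (\<forall>f\<in>set (F i). f \<in> Cc_deg c 1)}"

text \<open>Density in the inductive limit topology: f is a uniform limit of elements
  all supported in one fixed compact set.\<close>
definition inductive_limit_dense :: "('g::topological_space \<Rightarrow> complex) set \<Rightarrow> ('g \<Rightarrow> complex) set \<Rightarrow> bool"
  where "inductive_limit_dense S T \<longleftrightarrow>
    (\<forall>f\<in>T. \<exists>K. compact K \<and>
       (\<forall>\<epsilon>>0. \<exists>g\<in>S. closure {x. g x \<noteq> 0} \<subseteq> K \<and> (\<forall>x. norm (f x - g x) < \<epsilon>)))"

end

theory Submission
  imports Defs
begin

(*
  We prove slightly more than the density statement: for n > 0 the span of the n-fold
  convolution products of elements of C_c(G_1) is all of C_c(G_n).

  A locally compact Hausdorff second countable space is normal, so it has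
     Urysohn bump functions with compact support.  These split every f in C_c(A) into
     pieces supported in prescribed open sets, which yields a local-to-global principle:
     a property closed under sums that holds for functions with small support holds on
     all of C_c(A)  (Cc_on_local_to_global).
  2. Groupoid.  Since the range map has continuous local sections, convolution with a
     function supported on such a section is given by a single term; with the
     local-to-global principle this shows that convolution maps C_c(G_a) x C_c(G_b)
     into C_c(G_(a+b)).  For gamma of degree n+1, unperforation gives alpha of
     degree 1 with r alpha = r gamma.  On an open bisection W of degree 1 around alpha
     pick a bump h; then every f of degree n+1 supported near gamma equals h * (h^* * f),
     and h^* * f has degree n.
*)

definition supp :: "('a::topological_space \<Rightarrow> complex) \<Rightarrow> 'a set" where
  "supp f = closure {x. f x \<noteq> 0}"

definition Cc_on :: "'a::topological_space set \<Rightarrow> ('a \<Rightarrow> complex) set" where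
  "Cc_on A = {f. continuous_on UNIV f \<and> compact (supp f) \<and> supp f \<subseteq> A}"

lemma Cc_deg_eq_Cc_on: "Cc_deg c n = Cc_on (c -` {n})"
  unfolding Cc_deg_def Cc_on_def supp_def by auto

lemma in_supp: "f x \<noteq> 0 \<Longrightarrow> x \<in> supp f"
  unfolding supp_def by (simp add: closure_def)

lemma closed_supp [simp]: "closed (supp f)"
  unfolding supp_def by simp

lemma supp_mono: "(\<And>x. g x \<noteq> 0 \<Longrightarrow> f x \<noteq> 0) \<Longrightarrow> supp g \<subseteq> supp f"
  unfolding supp_def by (rule closure_mono) auto

lemma supp_subset_closed: "{x. f x \<noteq> 0} \<subseteq> S \<Longrightarrow> closed S \<Longrightarrow> supp f \<subseteq> S"
  unfolding supp_def by (rule closure_minimal)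

lemma compact_closed_subset: "compact K \<Longrightarrow> closed S \<Longrightarrow> S \<subseteq> K \<Longrightarrow> compact S"
  by (metis compact_Int_closed inf.absorb_iff2)

lemma open_vimage_UNIV: "continuous_on UNIV p \<Longrightarrow> open B \<Longrightarrow> open (p -` B)"
  using continuous_on_open_vimage[of UNIV p] by auto

lemma closed_vimage_UNIV: "continuous_on UNIV p \<Longrightarrow> closed B \<Longrightarrow> closed (p -` B)"
  using continuous_on_closed_vimage[of UNIV p] by auto

lemma Cc_on_zero: "(\<lambda>_. 0) \<in> Cc_on A"
  unfolding Cc_on_def supp_def by simp

lemma Cc_on_mono: "f \<in> Cc_on A \<Longrightarrow> A \<subseteq> B \<Longrightarrow> f \<in> Cc_on B"
  unfolding Cc_on_def by auto

lemma Cc_on_add: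
  assumes "f \<in> Cc_on A" "g \<in> Cc_on A"
  shows "(\<lambda>x. f x + g x) \<in> Cc_on A"
proof -
  have "{x. f x + g x \<noteq> 0} \<subseteq> supp f \<union> supp g"
    using in_supp[of f] in_supp[of g] by force
  then have "supp (\<lambda>x. f x + g x) \<subseteq> supp f \<union> supp g"
    by (rule supp_subset_closed) (simp add: closed_Un)
  then show ?thesis using assms unfolding Cc_on_def
    by (auto intro: continuous_on_add compact_closed_subset[OF compact_Un])
qed

lemma Cc_on_mult:
  assumes "f \<in> Cc_on A" "continuous_on UNIV g"
  shows "(\<lambda>x. g x * f x) \<in> Cc_on A"
proof -
  have "supp (\<lambda>x. g x * f x) \<subseteq> supp f" by (rule supp_mono) simp
  then show ?thesis using assms unfolding Cc_on_def
    by (auto intro: continuous_on_mult compact_closed_subset)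
qed

lemma Cc_on_lincomb:
  "(\<And>i. i < (k::nat) \<Longrightarrow> g i \<in> Cc_on A) \<Longrightarrow> (\<lambda>\<gamma>. \<Sum>i<k. a i * g i \<gamma>) \<in> Cc_on A"
  by (induction k) (simp_all add: Cc_on_zero Cc_on_add Cc_on_mult)

lemma Hausdorff_space_t2_space: "Hausdorff_space (euclidean :: 'a::t2_space topology)"
  unfolding Hausdorff_space_def by (metis disjnt_def open_openin separation_t2)

lemma Lindelof_space_second_countable:
  "Lindelof_space (euclidean :: 'a::second_countable_topology topology)"
  unfolding Lindelof_space_def
proof clarify
  fix \<U> :: "'a set set"
  assume "\<forall>U\<in>\<U>. openin euclidean U" "\<Union>\<U> = topspace euclidean"
  then obtain \<F> where "\<F> \<subseteq> \<U>" "countable \<F>" "\<Union>\<F> = \<Union>\<U>"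
    using Lindelof[of \<U>] by (metis open_openin)
  then show "\<exists>\<V>. countable \<V> \<and> \<V> \<subseteq> \<U> \<and> \<Union>\<V> = topspace euclidean"
    using \<open>\<Union>\<U> = topspace euclidean\<close> by auto
qed

lemma normal_space_locally_compact:
  assumes "locally_compact_space (euclidean :: 'a::{t2_space,second_countable_topology} topology)"
  shows "normal_space (euclidean :: 'a topology)"
  using regular_Lindelof_imp_normal_space[OF
      locally_compact_Hausdorff_imp_regular_space[OF assms Hausdorff_space_t2_space]
      Lindelof_space_second_countable] .

lemma compact_shrink:
  fixes C :: "'a::{t2_space,second_countable_topology} set"
  assumes lc: "locally_compact_space (euclidean :: 'a topology)"
    and C: "compact C" "open N" "C \<subseteq> N"
  obtains V where "open V" "C \<subseteq> V" "compact (closure V)" "closure V \<subseteq> N"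
proof -
  have "\<exists>U L. openin euclidean U \<and> compactin euclidean L \<and> closedin euclidean L \<and> C \<subseteq> U \<and> U \<subseteq> L"
    using iffD1[OF locally_compact_space_compact_closed_compact[OF disjI1[OF Hausdorff_space_t2_space]] lc] C(1)
    by simp
  then obtain U L where UL: "open U" "compact L" "closed L" "C \<subseteq> U" "U \<subseteq> L"
    by auto
  have "closed C" using C(1) by (simp add: compact_imp_closed)
  then obtain V where V: "open V" "C \<subseteq> V" "closure V \<subseteq> N"
    using normal_space_locally_compact[OF lc] C unfolding normal_space_alt
    by (metis closed_closedin euclidean_closure_of open_openin)
  show ?thesis
  proof
    show "open (V \<inter> U)" "C \<subseteq> V \<inter> U" using V UL by auto
    have "closure (V \<inter> U) \<subseteq> L" using UL by (meson closure_minimal inf_le2 order_trans)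
    then show "compact (closure (V \<inter> U))" using UL by (simp add: compact_closed_subset)
    show "closure (V \<inter> U) \<subseteq> N" using V by (meson closure_mono inf_le1 order_trans)
  qed
qed

lemma Cc_bump:
  fixes C :: "'a::{t2_space,second_countable_topology} set"
  assumes lc: "locally_compact_space (euclidean :: 'a topology)"
    and C: "compact C" "open N" "C \<subseteq> N"
  obtains h where "h \<in> Cc_on N" "\<And>x. x \<in> C \<Longrightarrow> h x = 1"
proof -
  obtain V where V: "open V" "C \<subseteq> V" "compact (closure V)" "closure V \<subseteq> N"
    using compact_shrink[OF lc C] .
  have "closedin euclidean (- V)" "closedin euclidean C" "disjnt (- V) C"
    using V C(1) by (auto simp: compact_imp_closed disjnt_def)
  then obtain \<phi> where \<phi>: "continuous_map euclidean (top_of_set {0..1::real}) \<phi>"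
    "\<phi> ` (- V) \<subseteq> {0}" "\<phi> ` C \<subseteq> {1}"
    using Urysohn_lemma[OF normal_space_locally_compact[OF lc], of "- V" C 0 1] by auto
  define h where "h x = complex_of_real (\<phi> x)" for x
  have "continuous_on UNIV h"
    using \<phi>(1) unfolding h_def
    by (intro continuous_on_of_real) (simp add: continuous_map_in_subtopology)
  moreover have "supp h \<subseteq> closure V"
    unfolding supp_def h_def by (rule closure_mono) (use \<phi>(2) in auto)
  ultimately have "h \<in> Cc_on N"
    using V unfolding Cc_on_def by (auto intro: compact_closed_subset)
  moreover have "h x = 1" if "x \<in> C" for x using \<phi>(3) that by (auto simp: h_def)
  ultimately show ?thesis using that by blast
qed

(* Partition of unity for two open sets: a function of C_c(A) supported in N \<union> U is
   the sum of one supported in N and one supported in U. *)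
lemma Cc_on_split:
  fixes f :: "'a::{t2_space,second_countable_topology} \<Rightarrow> complex"
  assumes lc: "locally_compact_space (euclidean :: 'a topology)"
    and f: "f \<in> Cc_on A" and NU: "open N" "open U" "supp f \<subseteq> N \<union> U"
  obtains f1 f2 where "f1 \<in> Cc_on A" "supp f1 \<subseteq> N" "f2 \<in> Cc_on A" "supp f2 \<subseteq> U"
    "f = (\<lambda>x. f1 x + f2 x)"
proof -
  have "compact (supp f \<inter> - U)"
    using f NU(2) by (simp add: Cc_on_def compact_Int_closed closed_Compl)
  then obtain V where V: "open V" "supp f \<inter> - U \<subseteq> V" "compact (closure V)" "closure V \<subseteq> N"
    using compact_shrink[OF lc _ NU(1)] NU(3) by blast
  obtain h where h: "h \<in> Cc_on N" "\<And>x. x \<in> closure V \<Longrightarrow> h x = 1"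
    using Cc_bump[OF lc V(3) NU(1) V(4)] by blast
  have ch: "continuous_on UNIV h" using h(1) by (simp add: Cc_on_def)
  define f1 where "f1 x = h x * f x" for x
  define f2 where "f2 x = (1 - h x) * f x" for x
  have "f1 \<in> Cc_on A" "f2 \<in> Cc_on A"
    unfolding f1_def f2_def using f ch by (auto intro!: Cc_on_mult continuous_on_diff)
  moreover have "supp f1 \<subseteq> N"
    using supp_mono[of f1 h] h(1) by (auto simp: f1_def Cc_on_def)
  moreover have "supp f2 \<subseteq> supp f \<inter> - V"
    using V(1) h(2) closure_subset[of V]
    by (intro supp_subset_closed) (auto simp: f2_def intro: in_supp)
  then have "supp f2 \<subseteq> U" using V(2) by blast
  moreover have "f = (\<lambda>x. f1 x + f2 x)"
    by (simp add: f1_def f2_def algebra_simps)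
  ultimately show ?thesis using that by blast
qed

lemma compact_pointwise_cover:
  assumes "compact K" and N: "\<And>x. x \<in> K \<Longrightarrow> open (N x) \<and> x \<in> N x"
  obtains T where "T \<subseteq> K" "finite T" "K \<subseteq> (\<Union>x\<in>T. N x)"
proof (rule compactE_image[OF assms(1)])
  show "open (N x)" if "x \<in> K" for x using N[OF that] ..
  show "K \<subseteq> (\<Union>x\<in>K. N x)" using N by blast
qed

lemma Cc_on_local_to_global:
  fixes P :: "('a::{t2_space,second_countable_topology} \<Rightarrow> complex) \<Rightarrow> bool"
  assumes lc: "locally_compact_space (euclidean :: 'a topology)"
    and zero: "P (\<lambda>_. 0)"
    and add: "\<And>f1 f2. f1 \<in> Cc_on A \<Longrightarrow> f2 \<in> Cc_on A \<Longrightarrow> P f1 \<Longrightarrow> P f2 \<Longrightarrow> P (\<lambda>x. f1 x + f2 x)"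
    and nbhd: "\<And>x. x \<in> A \<Longrightarrow> open (N x) \<and> x \<in> N x"
    and small: "\<And>x f. x \<in> A \<Longrightarrow> f \<in> Cc_on A \<Longrightarrow> supp f \<subseteq> N x \<Longrightarrow> P f"
    and f: "f \<in> Cc_on A"
  shows "P f"
proof -
  have cover: "P f" if "finite T" "T \<subseteq> A" "f \<in> Cc_on A" "supp f \<subseteq> (\<Union>x\<in>T. N x)" for T f
    using that
  proof (induction T arbitrary: f rule: finite_induct)
    case empty
    then have "f = (\<lambda>_. 0)" using in_supp[of f] by fastforce
    then show ?case using zero by simp
  next
    case (insert x T)
    have open_N: "open (N x)" "open (\<Union>y\<in>T. N y)" using nbhd insert.prems(1) by auto
    have "supp f \<subseteq> N x \<union> (\<Union>y\<in>T. N y)" using insert.prems(3) by simp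
    then obtain f1 f2 where f12: "f1 \<in> Cc_on A" "supp f1 \<subseteq> N x" "f2 \<in> Cc_on A"
      "supp f2 \<subseteq> (\<Union>y\<in>T. N y)" "f = (\<lambda>y. f1 y + f2 y)"
      using Cc_on_split[OF lc insert.prems(2) open_N] by blast
    have "P f1" using small[OF _ f12(1,2)] insert.prems(1) by simp
    moreover have "P f2" using insert.IH[OF _ f12(3,4)] insert.prems(1) by simp
    ultimately show ?case using add[OF f12(1,3)] f12(5) by simp
  qed
  have fA: "supp f \<subseteq> A" and kf: "compact (supp f)" using f by (auto simp: Cc_on_def)
  obtain T where T: "T \<subseteq> supp f" "finite T" "supp f \<subseteq> (\<Union>x\<in>T. N x)"
    by (rule compact_pointwise_cover[OF kf, of N]) (use nbhd fA in auto)
  show ?thesis by (rule cover[OF T(2) _ f T(3)]) (use T(1) fA in blast)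
qed

(* A continuous local inverse \<sigma> of p on the open set U with p(U) open.  For p = r
   these are the open bisections that make an etale groupoid look locally like its
   unit space. *)
definition local_section ::
  "('a::topological_space \<Rightarrow> 'b::topological_space) \<Rightarrow> 'a set \<Rightarrow> ('b \<Rightarrow> 'a) \<Rightarrow> bool"
  where "local_section p U \<sigma> \<longleftrightarrow>
    open U \<and> open (p ` U) \<and> continuous_on (p ` U) \<sigma> \<and> (\<forall>x\<in>U. \<sigma> (p x) = x)"

lemma local_section_inverse:
  assumes "local_section p U \<sigma>" "y \<in> p ` U"
  shows "\<sigma> y \<in> U" "p (\<sigma> y) = y"
  using assms unfolding local_section_def by auto

lemma local_section_inj: "local_section p U \<sigma> \<Longrightarrow> inj_on p U"
  unfolding local_section_def inj_on_def by metis

lemma local_section_subset: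
  assumes U: "local_section p U \<sigma>" and V: "open V" "V \<subseteq> U"
  shows "local_section p V \<sigma>"
proof -
  have "p ` V = \<sigma> -` V \<inter> p ` U"
    using U V(2) by (auto simp: local_section_def)
  moreover have "open (\<sigma> -` V \<inter> p ` U)"
    using U V(1) continuous_on_open_vimage[of "p ` U" \<sigma>] by (auto simp: local_section_def)
  ultimately show ?thesis
    using U V unfolding local_section_def by (auto intro: continuous_on_subset)
qed

lemma conv_eq_sum:
  assumes "finite D" "{\<alpha>. r \<alpha> = r \<gamma> \<and> f \<alpha> \<noteq> 0} \<subseteq> D" "\<forall>\<alpha>\<in>D. r \<alpha> = r \<gamma>"
  shows "conv r m iv f g \<gamma> = (\<Sum>\<alpha>\<in>D. f \<alpha> * g (m (iv \<alpha>) \<gamma>))"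
  unfolding conv_def by (rule sum.mono_neutral_left) (use assms in auto)

lemma conv_lincomb_right:
  "conv r m iv f (\<lambda>\<gamma>. \<Sum>i<k. a i * g i \<gamma>) \<gamma> = (\<Sum>i<k. a i * conv r m iv f (g i) \<gamma>)"
proof -
  have "conv r m iv f (\<lambda>\<gamma>. \<Sum>i<k. a i * g i \<gamma>) \<gamma> =
    (\<Sum>\<alpha>\<in>{\<alpha>. r \<alpha> = r \<gamma> \<and> f \<alpha> \<noteq> 0}. \<Sum>i<k. a i * (f \<alpha> * g i (m (iv \<alpha>) \<gamma>)))"
    unfolding conv_def by (simp add: sum_distrib_left mult.left_commute)
  also have "\<dots> = (\<Sum>i<k. \<Sum>\<alpha>\<in>{\<alpha>. r \<alpha> = r \<gamma> \<and> f \<alpha> \<noteq> 0}. a i * (f \<alpha> * g i (m (iv \<alpha>) \<gamma>)))"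
    by (rule sum.swap)
  finally show ?thesis unfolding conv_def by (simp add: sum_distrib_left)
qed

lemma prod_spanI:
  assumes "f = (\<lambda>\<gamma>. \<Sum>i<(k::nat). a i * conv_list r m iv (F i) \<gamma>)"
    "\<forall>i<k. length (F i) = n \<and> (\<forall>f\<in>set (F i). f \<in> Cc_deg c 1)"
  shows "f \<in> prod_span r m iv c n"
  unfolding prod_span_def using assms by blast

lemma prod_spanE:
  assumes "f \<in> prod_span r m iv c n"
  obtains k :: nat and a F where "f = (\<lambda>\<gamma>. \<Sum>i<k. a i * conv_list r m iv (F i) \<gamma>)"
    "\<forall>i<k. length (F i) = n \<and> (\<forall>f\<in>set (F i). f \<in> Cc_deg c 1)"
  using assms unfolding prod_span_def by auto

lemma prod_span_zero: "(\<lambda>_. 0) \<in> prod_span r m iv c n"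
  by (rule prod_spanI[where k = 0]) simp_all

lemma prod_span_add:
  assumes "f1 \<in> prod_span r m iv c n" "f2 \<in> prod_span r m iv c n"
  shows "(\<lambda>x. f1 x + f2 x) \<in> prod_span r m iv c n"
proof -
  obtain k1 :: nat and a1 F1 where 1: "f1 = (\<lambda>\<gamma>. \<Sum>i<k1. a1 i * conv_list r m iv (F1 i) \<gamma>)"
    "\<forall>i<k1. length (F1 i) = n \<and> (\<forall>f\<in>set (F1 i). f \<in> Cc_deg c 1)"
    using assms(1) by (rule prod_spanE)
  obtain k2 :: nat and a2 F2 where 2: "f2 = (\<lambda>\<gamma>. \<Sum>i<k2. a2 i * conv_list r m iv (F2 i) \<gamma>)"
    "\<forall>i<k2. length (F2 i) = n \<and> (\<forall>f\<in>set (F2 i). f \<in> Cc_deg c 1)"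
    using assms(2) by (rule prod_spanE)
  define a where "a i = (if i < k1 then a1 i else a2 (i - k1))" for i
  define F where "F i = (if i < k1 then F1 i else F2 (i - k1))" for i
  have split: "(\<Sum>i<k1 + k2. h i) = (\<Sum>i<k1. h i) + (\<Sum>i<k2. h (k1 + i))" for h :: "nat \<Rightarrow> complex"
    by (induction k2) (simp_all add: add.assoc)
  show ?thesis
  proof (rule prod_spanI)
    show "(\<lambda>x. f1 x + f2 x) = (\<lambda>\<gamma>. \<Sum>i<k1 + k2. a i * conv_list r m iv (F i) \<gamma>)"
      unfolding 1 2 split by (simp add: a_def F_def)
    show "\<forall>i<k1 + k2. length (F i) = n \<and> (\<forall>f\<in>set (F i). f \<in> Cc_deg c 1)"
    proof (intro allI impI)
      fix i assume "i < k1 + k2"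
      then show "length (F i) = n \<and> (\<forall>f\<in>set (F i). f \<in> Cc_deg c 1)"
        using 1(2) 2(2)[rule_format, of "i - k1"] by (auto simp: F_def)
    qed
  qed
qed

lemma prod_span_degree_one: "f \<in> Cc_deg c 1 \<Longrightarrow> f \<in> prod_span r m iv c 1"
  by (rule prod_spanI[where k = 1 and a = "\<lambda>_. 1" and F = "\<lambda>_. [f]"]) simp_all

locale graded_etale_groupoid =
  fixes r s iv :: "'g::{t2_space,second_countable_topology} \<Rightarrow> 'g"
    and m :: "'g \<Rightarrow> 'g \<Rightarrow> 'g"
    and c :: "'g \<Rightarrow> int"
  assumes etale_groupoid: "etale_groupoid r s m iv"
    and cocycle: "cocycle r s m c"
begin

lemma rr [simp]: "r (r g) = r g" and sr [simp]: "s (r g) = r g"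
  and rs [simp]: "r (s g) = s g" and ss [simp]: "s (s g) = s g"
  using etale_groupoid unfolding etale_groupoid_def by auto

lemma rm [simp]: "s g = r h \<Longrightarrow> r (m g h) = r g"
  and sm [simp]: "s g = r h \<Longrightarrow> s (m g h) = s h"
  using etale_groupoid unfolding etale_groupoid_def by auto

lemma assoc: "s g = r h \<Longrightarrow> s h = r k \<Longrightarrow> m (m g h) k = m g (m h k)"
  using etale_groupoid unfolding etale_groupoid_def by auto

lemma unitl [simp]: "m (r g) g = g" and unitr [simp]: "m g (s g) = g"
  using etale_groupoid unfolding etale_groupoid_def by auto

lemma siv [simp]: "s (iv g) = r g" and riv [simp]: "r (iv g) = s g"
  and miv [simp]: "m g (iv g) = r g" and ivm [simp]: "m (iv g) g = s g"
  using etale_groupoid unfolding etale_groupoid_def by auto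

lemma iviv [simp]: "iv (iv g) = g"
proof -
  have "iv (iv g) = m (iv (iv g)) (s (iv (iv g)))" by (rule unitr[symmetric])
  also have "\<dots> = m (iv (iv g)) (m (iv g) g)" by (simp only: siv riv ivm)
  also have "\<dots> = m (m (iv (iv g)) (iv g)) g" by (rule assoc[symmetric]) simp_all
  also have "\<dots> = g" by (simp only: ivm siv unitl)
  finally show ?thesis .
qed

lemma m_iv_cancel [simp]: "r \<alpha> = r \<gamma> \<Longrightarrow> m \<alpha> (m (iv \<alpha>) \<gamma>) = \<gamma>"
  by (simp add: assoc[symmetric])

lemma lc: "locally_compact_space (euclidean :: 'g topology)"
  and cont_m: "continuous_on {(g, h). s g = r h} (\<lambda>(g, h). m g h)"
  and cont_iv: "continuous_on UNIV iv" and cont_r: "continuous_on UNIV r"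
  and cont_s: "continuous_on UNIV s"
  and etale: "\<And>g. \<exists>U r'. open U \<and> g \<in> U \<and> open (r ` U) \<and> homeomorphism U (r ` U) r r'"
  using etale_groupoid unfolding etale_groupoid_def by auto

lemma cont_c: "continuous_on UNIV c" and c_mult: "s g = r h \<Longrightarrow> c (m g h) = c g + c h"
  using cocycle unfolding cocycle_def by auto

lemma c_r [simp]: "c (r g) = 0"
  using c_mult[of "r g" "r g"] unitl[of "r g"] by simp

lemma c_iv [simp]: "c (iv g) = - c g"
  using c_mult[of g "iv g"] by simp

lemma open_degree: "open (c -` {k})"
  using open_vimage_UNIV[OF cont_c] by (simp add: open_discrete)

lemma r_section_exists: "\<exists>U \<sigma>. x \<in> U \<and> local_section r U \<sigma>"
proof -
  obtain U \<sigma> where "open U" "x \<in> U" "open (r ` U)" "homeomorphism U (r ` U) r \<sigma>"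
    using etale by blast
  then show ?thesis unfolding homeomorphism_def local_section_def by blast
qed

lemma finite_fibre:
  assumes "compact K"
  shows "finite {x\<in>K. r x = u}"
proof -
  obtain N \<sigma> where N: "\<And>x. x \<in> N x \<and> local_section r (N x) (\<sigma> x)"
    using r_section_exists by metis
  obtain T where T: "T \<subseteq> K" "finite T" "K \<subseteq> (\<Union>x\<in>T. N x)"
    by (rule compact_pointwise_cover[OF assms, of N]) (use N in \<open>auto simp: local_section_def\<close>)
  have "{x\<in>K. r x = u} \<subseteq> (\<lambda>y. \<sigma> y u) ` T"
  proof
    fix x assume "x \<in> {x\<in>K. r x = u}"
    then obtain y where "y \<in> T" "x \<in> N y" "r x = u" using T by auto
    then show "x \<in> (\<lambda>y. \<sigma> y u) ` T" using N[of y] by (force simp: local_section_def)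
  qed
  then show ?thesis using T(2) finite_subset by blast
qed

lemma conv_add_left:
  assumes "compact (supp f1)" "compact (supp f2)"
  shows "conv r m iv (\<lambda>x. f1 x + f2 x) g \<gamma> = conv r m iv f1 g \<gamma> + conv r m iv f2 g \<gamma>"
proof -
  define D where "D = {x\<in>supp f1 \<union> supp f2. r x = r \<gamma>}"
  have D: "finite D" "\<forall>\<alpha>\<in>D. r \<alpha> = r \<gamma>"
    unfolding D_def using finite_fibre[OF compact_Un[OF assms]] by auto
  have "{\<alpha>. r \<alpha> = r \<gamma> \<and> f1 \<alpha> + f2 \<alpha> \<noteq> 0} \<subseteq> D"
  proof clarify
    fix \<alpha> assume "r \<alpha> = r \<gamma>" "f1 \<alpha> + f2 \<alpha> \<noteq> 0"
    moreover have "f1 \<alpha> \<noteq> 0 \<or> f2 \<alpha> \<noteq> 0" using calculation(2) by auto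
    ultimately show "\<alpha> \<in> D" by (auto simp: D_def intro: in_supp)
  qed
  then have "conv r m iv (\<lambda>x. f1 x + f2 x) g \<gamma> = (\<Sum>\<alpha>\<in>D. (f1 \<alpha> + f2 \<alpha>) * g (m (iv \<alpha>) \<gamma>))"
    by (rule conv_eq_sum[OF D(1) _ D(2)])
  also have "\<dots> = (\<Sum>\<alpha>\<in>D. f1 \<alpha> * g (m (iv \<alpha>) \<gamma>)) + (\<Sum>\<alpha>\<in>D. f2 \<alpha> * g (m (iv \<alpha>) \<gamma>))"
    by (simp add: distrib_right sum.distrib)
  also have "\<dots> = conv r m iv f1 g \<gamma> + conv r m iv f2 g \<gamma>"
  proof -
    have "conv r m iv fi g \<gamma> = (\<Sum>\<alpha>\<in>D. fi \<alpha> * g (m (iv \<alpha>) \<gamma>))"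
      if "fi \<in> {f1, f2}" for fi
      by (rule conv_eq_sum[OF D(1) _ D(2)]) (use that in \<open>auto simp: D_def intro: in_supp\<close>)
    then show ?thesis by simp
  qed
  finally show ?thesis .
qed

lemma conv_on_section:
  assumes U: "local_section r U \<sigma>" and fU: "{x. f x \<noteq> 0} \<subseteq> U"
  shows "conv r m iv f g \<gamma> =
    (if r \<gamma> \<in> r ` U then f (\<sigma> (r \<gamma>)) * g (m (iv (\<sigma> (r \<gamma>))) \<gamma>) else 0)"
proof (cases "r \<gamma> \<in> r ` U")
  case True
  have "conv r m iv f g \<gamma> = (\<Sum>\<alpha>\<in>{\<sigma> (r \<gamma>)}. f \<alpha> * g (m (iv \<alpha>) \<gamma>))"
  proof (rule conv_eq_sum)
    show "{\<alpha>. r \<alpha> = r \<gamma> \<and> f \<alpha> \<noteq> 0} \<subseteq> {\<sigma> (r \<gamma>)}"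
      using fU U by (force simp: local_section_def)
    show "\<forall>\<alpha>\<in>{\<sigma> (r \<gamma>)}. r \<alpha> = r \<gamma>" using local_section_inverse[OF U True] by simp
  qed simp
  then show ?thesis using True by simp
next
  case False
  then have "{\<alpha>. r \<alpha> = r \<gamma> \<and> f \<alpha> \<noteq> 0} = {}" using fU by (fastforce simp: image_iff)
  then show ?thesis using False by (simp add: conv_def)
qed

lemma closed_composable: "closed {(x, y). s x = r y}"
proof -
  have "continuous_on UNIV (\<lambda>p. s (fst p))"
    by (rule continuous_on_compose2[OF cont_s continuous_on_fst[OF continuous_on_id]]) auto
  moreover have "continuous_on UNIV (\<lambda>p. r (snd p))"
    by (rule continuous_on_compose2[OF cont_r continuous_on_snd[OF continuous_on_id]]) auto
  ultimately have "closed {p. s (fst p) = r (snd p)}" by (rule closed_Collect_eq)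
  then show ?thesis by (simp add: case_prod_unfold)
qed

lemma section_translation_continuous:
  assumes U: "local_section r U \<sigma>"
  shows "continuous_on (r -` (r ` U)) (\<lambda>\<gamma>. \<sigma> (r \<gamma>))"
    and "continuous_on (r -` (r ` U)) (\<lambda>\<gamma>. m (iv (\<sigma> (r \<gamma>))) \<gamma>)"
proof -
  have c\<sigma>: "continuous_on (r ` U) \<sigma>" using U by (simp add: local_section_def)
  show c\<sigma>r: "continuous_on (r -` (r ` U)) (\<lambda>\<gamma>. \<sigma> (r \<gamma>))"
    by (rule continuous_on_compose2[OF c\<sigma> continuous_on_subset[OF cont_r]]) auto
  have "continuous_on (r -` (r ` U)) (\<lambda>\<gamma>. (iv (\<sigma> (r \<gamma>)), \<gamma>))"
    by (intro continuous_intros continuous_on_compose2[OF cont_iv c\<sigma>r]) auto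
  moreover have "(\<lambda>\<gamma>. (iv (\<sigma> (r \<gamma>)), \<gamma>)) ` (r -` (r ` U)) \<subseteq> {(g, h). s g = r h}"
    using local_section_inverse[OF U] by auto
  ultimately show "continuous_on (r -` (r ` U)) (\<lambda>\<gamma>. m (iv (\<sigma> (r \<gamma>))) \<gamma>)"
    using continuous_on_compose2[OF cont_m] by fastforce
qed

(* Continuity of the convolution f * g when f lives on a local section of r: there it
   is the single term f(\<sigma>(r \<gamma>)) g(\<sigma>(r \<gamma>)^{-1} \<gamma>), and it vanishes off r^{-1}(r(supp f)). *)
lemma conv_continuous_on_section:
  assumes U: "local_section r U \<sigma>" and f: "f \<in> Cc_on U" and cg: "continuous_on UNIV g"
  shows "continuous_on UNIV (conv r m iv f g)"
proof -
  have cf: "continuous_on UNIV f" and kf: "compact (supp f)" and fU: "supp f \<subseteq> U"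
    using f by (auto simp: Cc_on_def)
  have orU: "open (r ` U)" using U by (simp add: local_section_def)
  have eq: "conv r m iv f g \<gamma> = (if r \<gamma> \<in> r ` U then f (\<sigma> (r \<gamma>)) * g (m (iv (\<sigma> (r \<gamma>))) \<gamma>) else 0)"
    for \<gamma> using conv_on_section[OF U] fU in_supp[of f] by blast
  define A1 where "A1 = r -` (r ` U)"
  define A2 where "A2 = - (r -` (r ` supp f))"
  have "open A1" unfolding A1_def by (rule open_vimage_UNIV[OF cont_r orU])
  have "compact (r ` supp f)"
    using kf cont_r by (meson compact_continuous_image continuous_on_subset subset_UNIV)
  then have "open A2"
    unfolding A2_def by (simp add: closed_vimage_UNIV[OF cont_r] compact_imp_closed open_Compl)
  have c1: "continuous_on A1 (conv r m iv f g)"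
  proof -
    note translation = section_translation_continuous[OF U, folded A1_def]
    have "continuous_on A1 (\<lambda>\<gamma>. f (\<sigma> (r \<gamma>)) * g (m (iv (\<sigma> (r \<gamma>))) \<gamma>))"
      by (intro continuous_intros continuous_on_compose2[OF cf translation(1)]
          continuous_on_compose2[OF cg translation(2)]) auto
    then show ?thesis by (rule continuous_on_cong[THEN iffD1, rotated 2]) (auto simp: eq A1_def)
  qed
  have c2: "continuous_on A2 (conv r m iv f g)"
  proof -
    have "conv r m iv f g \<gamma> = 0" if "\<gamma> \<in> A2" for \<gamma>
    proof (rule ccontr)
      assume "conv r m iv f g \<gamma> \<noteq> 0"
      then have r\<gamma>: "r \<gamma> \<in> r ` U" and "\<sigma> (r \<gamma>) \<in> supp f"
        by (auto simp: eq intro: in_supp split: if_splits)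
      moreover have "r (\<sigma> (r \<gamma>)) = r \<gamma>" using local_section_inverse(2)[OF U r\<gamma>] .
      ultimately have "r \<gamma> \<in> r ` supp f" by (metis image_eqI)
      then show False using that by (simp add: A2_def)
    qed
    then have "continuous_on A2 (conv r m iv f g) \<longleftrightarrow> continuous_on A2 (\<lambda>_. 0::complex)"
      by (intro continuous_on_cong) auto
    then show ?thesis by simp
  qed
  have "A1 \<union> A2 = UNIV" using fU by (auto simp: A1_def A2_def)
  then show ?thesis using continuous_on_open_Un[OF \<open>open A1\<close> \<open>open A2\<close> c1 c2] by simp
qed

(* Convolution on the left by a function of C_c(G) preserves continuity: split f into
   pieces living on local sections of r. *)
lemma conv_continuous:
  assumes f: "f \<in> Cc_on UNIV" and cg: "continuous_on UNIV g"
  shows "continuous_on UNIV (conv r m iv f g)"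
proof -
  obtain N \<sigma> where N: "\<And>x. x \<in> N x \<and> local_section r (N x) (\<sigma> x)"
    using r_section_exists by metis
  show ?thesis
  proof (rule Cc_on_local_to_global[OF lc, where P = "\<lambda>f. continuous_on UNIV (conv r m iv f g)"
        and A = UNIV and N = N])
    show "continuous_on UNIV (conv r m iv (\<lambda>_. 0) g)" by (simp add: conv_def)
    show "continuous_on UNIV (conv r m iv (\<lambda>x. f1 x + f2 x) g)"
      if "f1 \<in> Cc_on UNIV" "f2 \<in> Cc_on UNIV" "continuous_on UNIV (conv r m iv f1 g)"
        "continuous_on UNIV (conv r m iv f2 g)" for f1 f2
      using that conv_add_left[of f1 f2 g] by (simp add: Cc_on_def continuous_on_add)
    show "open (N x) \<and> x \<in> N x" for x using N[of x] by (simp add: local_section_def)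
    show "continuous_on UNIV (conv r m iv f' g)" if "f' \<in> Cc_on UNIV" "supp f' \<subseteq> N x" for x f'
      using conv_continuous_on_section[OF conjunct2[OF N[of x]] _ cg] that by (simp add: Cc_on_def)
  qed (rule f)
qed

lemma conv_support:
  assumes "compact (supp f)" "compact (supp g)"
  defines "M \<equiv> (\<lambda>(x, y). m x y) ` ((supp f \<times> supp g) \<inter> {(x, y). s x = r y})"
  shows "compact M" "supp (conv r m iv f g) \<subseteq> M"
proof -
  have "compact ((supp f \<times> supp g) \<inter> {(x, y). s x = r y})"
    using assms(1,2) closed_composable by (simp add: compact_Int_closed compact_Times)
  moreover have "continuous_on ((supp f \<times> supp g) \<inter> {(x, y). s x = r y}) (\<lambda>(x, y). m x y)"
    by (rule continuous_on_subset[OF cont_m]) auto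
  ultimately show "compact M" unfolding M_def by (rule compact_continuous_image[rotated])
  have "\<gamma> \<in> M" if nonzero: "conv r m iv f g \<gamma> \<noteq> 0" for \<gamma>
  proof -
    have "\<exists>\<alpha>\<in>{\<alpha>. r \<alpha> = r \<gamma> \<and> f \<alpha> \<noteq> 0}. f \<alpha> * g (m (iv \<alpha>) \<gamma>) \<noteq> 0"
      using nonzero unfolding conv_def by (meson sum.neutral)
    then obtain \<alpha> where \<alpha>: "r \<alpha> = r \<gamma>" "f \<alpha> \<noteq> 0" "g (m (iv \<alpha>) \<gamma>) \<noteq> 0"
      by auto
    then have "(\<alpha>, m (iv \<alpha>) \<gamma>) \<in> (supp f \<times> supp g) \<inter> {(x, y). s x = r y}"
      by (auto intro: in_supp)
    then show ?thesis unfolding M_def using \<alpha>(1) by (force intro: image_eqI[where x = "(\<alpha>, m (iv \<alpha>) \<gamma>)"])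
  qed
  then show "supp (conv r m iv f g) \<subseteq> M"
    using \<open>compact M\<close> by (intro supp_subset_closed) (auto intro: compact_imp_closed)
qed

lemma conv_Cc_deg:
  assumes f: "f \<in> Cc_deg c a" and g: "g \<in> Cc_deg c b"
  shows "conv r m iv f g \<in> Cc_deg c (a + b)"
proof -
  have kf: "compact (supp f)" and kg: "compact (supp g)"
    using f g by (auto simp: Cc_deg_eq_Cc_on Cc_on_def)
  define M where "M = (\<lambda>(x, y). m x y) ` ((supp f \<times> supp g) \<inter> {(x, y). s x = r y})"
  have M: "compact M" "supp (conv r m iv f g) \<subseteq> M"
    using conv_support[OF kf kg] unfolding M_def by auto
  have "c x = a" if "x \<in> supp f" for x using f that by (auto simp: Cc_deg_eq_Cc_on Cc_on_def)
  moreover have "c y = b" if "y \<in> supp g" for y using g that by (auto simp: Cc_deg_eq_Cc_on Cc_on_def)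
  ultimately have "M \<subseteq> c -` {a + b}" by (auto simp: M_def c_mult)
  moreover have "compact (supp (conv r m iv f g))" by (rule compact_closed_subset[OF M(1) closed_supp M(2)])
  moreover have "continuous_on UNIV (conv r m iv f g)"
    using f g by (intro conv_continuous) (auto simp: Cc_deg_eq_Cc_on Cc_on_def)
  ultimately show ?thesis using M(2) unfolding Cc_deg_eq_Cc_on Cc_on_def by blast
qed

lemma conv_list_Cc_deg:
  "F \<noteq> [] \<Longrightarrow> \<forall>f\<in>set F. f \<in> Cc_deg c 1 \<Longrightarrow> conv_list r m iv F \<in> Cc_deg c (int (length F))"
proof (induction F)
  case (Cons f F)
  show ?case
  proof (cases "F = []")
    case True
    then show ?thesis using Cons.prems by simp
  next
    case False
    then obtain g fs where F: "F = g # fs" by (cases F) auto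
    have "conv_list r m iv F \<in> Cc_deg c (int (length F))" using Cons False by simp
    then have "conv r m iv f (conv_list r m iv F) \<in> Cc_deg c (1 + int (length F))"
      using conv_Cc_deg Cons.prems by simp
    then show ?thesis using F by (simp add: add.commute)
  qed
qed simp

lemma involution_involution [simp]: "involution iv (involution iv f) = f"
  unfolding involution_def by simp

lemma involution_Cc_deg:
  assumes f: "f \<in> Cc_deg c k"
  shows "involution iv f \<in> Cc_deg c (- k)"
proof -
  have kf: "compact (supp f)" and cf: "continuous_on UNIV f" and fk: "supp f \<subseteq> c -` {k}"
    using f by (auto simp: Cc_deg_eq_Cc_on Cc_on_def)
  have ki: "compact (iv ` supp f)"
    using kf cont_iv by (meson compact_continuous_image continuous_on_subset subset_UNIV)
  have supp_inv: "supp (involution iv f) \<subseteq> iv ` supp f"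
  proof (rule supp_subset_closed)
    show "{x. involution iv f x \<noteq> 0} \<subseteq> iv ` supp f"
    proof
      fix x assume "x \<in> {x. involution iv f x \<noteq> 0}"
      then have "iv x \<in> supp f" by (simp add: involution_def in_supp)
      then show "x \<in> iv ` supp f" by (rule rev_image_eqI) simp
    qed
  qed (rule compact_imp_closed[OF ki])
  then have "compact (supp (involution iv f))" by (rule compact_closed_subset[OF ki closed_supp])
  moreover have "iv ` supp f \<subseteq> c -` {- k}" using fk by auto
  moreover have "continuous_on UNIV (involution iv f)" unfolding involution_def
    by (intro continuous_intros continuous_on_compose2[OF cf cont_iv]) auto
  ultimately show ?thesis using supp_inv unfolding Cc_deg_eq_Cc_on Cc_on_def by blast
qed

lemma involution_image: "involution iv ` Cc_deg c k = Cc_deg c (- k)"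
proof
  show "involution iv ` Cc_deg c k \<subseteq> Cc_deg c (- k)" using involution_Cc_deg by blast
  show "Cc_deg c (- k) \<subseteq> involution iv ` Cc_deg c k"
  proof
    fix f assume "f \<in> Cc_deg c (- k)"
    then have "involution iv f \<in> Cc_deg c k" using involution_Cc_deg[of f "- k"] by simp
    then show "f \<in> involution iv ` Cc_deg c k" by (rule rev_image_eqI) simp
  qed
qed

lemma prod_span_conv_left:
  assumes g: "g \<in> prod_span r m iv c n" and n: "n \<ge> 1" and h: "h \<in> Cc_deg c 1"
  shows "conv r m iv h g \<in> prod_span r m iv c (Suc n)"
proof -
  obtain k :: nat and a F where g_eq: "g = (\<lambda>\<gamma>. \<Sum>i<k. a i * conv_list r m iv (F i) \<gamma>)"
    and F: "\<forall>i<k. length (F i) = n \<and> (\<forall>f\<in>set (F i). f \<in> Cc_deg c 1)"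
    using g by (rule prod_spanE)
  have cons: "conv r m iv h (conv_list r m iv (F i)) = conv_list r m iv (h # F i)" if "i < k" for i
    using F that n by (cases "F i") auto
  show ?thesis
  proof (rule prod_spanI)
    show "conv r m iv h g = (\<lambda>\<gamma>. \<Sum>i<k. a i * conv_list r m iv (h # F i) \<gamma>)"
      unfolding g_eq conv_lincomb_right using cons by (simp add: fun_eq_iff)
    show "\<forall>i<k. length (h # F i) = Suc n \<and> (\<forall>f\<in>set (h # F i). f \<in> Cc_deg c 1)"
      using F h by simp
  qed
qed

lemma prod_span_subset:
  assumes "n > 0"
  shows "prod_span r m iv c n \<subseteq> Cc_deg c (int n)"
proof
  fix f assume "f \<in> prod_span r m iv c n"
  then obtain k :: nat and a F where f: "f = (\<lambda>\<gamma>. \<Sum>i<k. a i * conv_list r m iv (F i) \<gamma>)"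
    and F: "\<forall>i<k. length (F i) = n \<and> (\<forall>f\<in>set (F i). f \<in> Cc_deg c 1)"
    by (rule prod_spanE)
  have "conv_list r m iv (F i) \<in> Cc_on (c -` {int n})" if "i < k" for i
    using conv_list_Cc_deg[of "F i"] F that assms by (auto simp: Cc_deg_eq_Cc_on)
  then show "f \<in> Cc_deg c (int n)" unfolding f Cc_deg_eq_Cc_on by (rule Cc_on_lincomb)
qed

lemma list_prod_r: "composable_list r s (a # xs) \<Longrightarrow> r (list_prod m a xs) = r a"
proof (induction xs arbitrary: a)
  case (Cons b bs)
  then have "s a = r b" "composable_list r s (m a b # bs)" by (cases bs; simp)+
  then show ?case using Cons.IH by simp
qed simp

lemma degree_one_factor:
  assumes unp: "unperforated r s m c" and pos: "c \<gamma> > 0"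
  obtains \<alpha> where "c \<alpha> = 1" "r \<alpha> = r \<gamma>"
proof -
  have "c \<gamma> = int (nat (c \<gamma>))" "nat (c \<gamma>) > 0" using pos by simp_all
  then obtain gs where gs: "length gs = nat (c \<gamma>)" "composable_list r s gs"
    "\<forall>x\<in>set gs. c x = 1" "\<gamma> = list_prod m (hd gs) (tl gs)"
    using unp unfolding unperforated_def by blast
  then obtain \<alpha> rest where "gs = \<alpha> # rest" using pos by (cases gs) auto
  then show ?thesis using that gs list_prod_r by auto
qed

lemma degree_one_bisection:
  assumes "c \<alpha> = 1"
  obtains W \<sigma> where "\<alpha> \<in> W" "W \<subseteq> c -` {1}" "local_section r W \<sigma>" "inj_on s W"
proof -
  obtain U \<sigma> where U: "\<alpha> \<in> U" "local_section r U \<sigma>" using r_section_exists by blast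
  obtain V \<tau> where V: "iv \<alpha> \<in> V" "local_section r V \<tau>" using r_section_exists by blast
  define W where "W = U \<inter> iv -` V \<inter> c -` {1}"
  have "open W"
    using U(2) V(2) open_vimage_UNIV[OF cont_iv] open_degree
    by (auto simp: W_def local_section_def)
  have "inj_on s W"
  proof (rule inj_onI)
    fix x y assume "x \<in> W" "y \<in> W" "s x = s y"
    then have "r (iv x) = r (iv y)" "iv x \<in> V" "iv y \<in> V" by (auto simp: W_def)
    then have "iv x = iv y" by (rule inj_onD[OF local_section_inj[OF V(2)]])
    then show "x = y" by (metis iviv)
  qed
  moreover have "local_section r W \<sigma>"
    using local_section_subset[OF U(2) \<open>open W\<close>] by (auto simp: W_def)
  moreover have "\<alpha> \<in> W" "W \<subseteq> c -` {1}" using U V assms by (auto simp: W_def)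
  ultimately show ?thesis using that by blast
qed

lemma conv_section_involution:
  assumes W: "local_section r W \<sigma>" and inj: "inj_on s W"
    and hW: "{x. h x \<noteq> 0} \<subseteq> W"
    and f: "\<And>\<gamma>. f \<gamma> \<noteq> 0 \<Longrightarrow> r \<gamma> \<in> r ` W \<and> h (\<sigma> (r \<gamma>)) = 1"
  shows "conv r m iv h (conv r m iv (involution iv h) f) = f"
proof
  fix \<gamma>
  show "conv r m iv h (conv r m iv (involution iv h) f) \<gamma> = f \<gamma>"
  proof (cases "r \<gamma> \<in> r ` W")
    case False
    then show ?thesis using f[of \<gamma>] by (auto simp: conv_on_section[OF W hW])
  next
    case True
    define t where "t = \<sigma> (r \<gamma>)"
    have t: "t \<in> W" "r t = r \<gamma>" using local_section_inverse[OF W True] by (auto simp: t_def)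
    define \<delta> where "\<delta> = m (iv t) \<gamma>"
    have r\<delta>: "r \<delta> = s t" using t by (simp add: \<delta>_def)
    have "{\<beta>. r \<beta> = r \<delta> \<and> involution iv h \<beta> \<noteq> 0} \<subseteq> {iv t}"
    proof clarify
      fix \<beta> assume "r \<beta> = r \<delta>" "involution iv h \<beta> \<noteq> 0"
      then have "s (iv \<beta>) = s t" "iv \<beta> \<in> W" using hW r\<delta> by (auto simp: involution_def)
      then have "iv \<beta> = t" using t(1) by (rule inj_onD[OF inj])
      then show "\<beta> = iv t" by (metis iviv)
    qed
    then have "conv r m iv (involution iv h) f \<delta> = involution iv h (iv t) * f (m (iv (iv t)) \<delta>)"
      using conv_eq_sum[of "{iv t}" r \<delta> "involution iv h" m iv f] r\<delta> by simp
    also have "\<dots> = cnj (h t) * f \<gamma>" using t by (simp add: involution_def \<delta>_def)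
    finally have "conv r m iv h (conv r m iv (involution iv h) f) \<gamma> = h t * cnj (h t) * f \<gamma>"
      using True by (simp add: conv_on_section[OF W hW] t_def \<delta>_def)
    then show ?thesis using f[of \<gamma>] by (cases "f \<gamma> = 0") (auto simp: t_def)
  qed
qed

lemma section_bump:
  assumes W: "local_section r W \<sigma>" and K: "compact K" "K \<subseteq> r -` (r ` W)"
  obtains h where "h \<in> Cc_on W" "\<And>\<gamma>. \<gamma> \<in> K \<Longrightarrow> h (\<sigma> (r \<gamma>)) = 1"
proof -
  have oW: "open W" and c\<sigma>: "continuous_on (r ` W) \<sigma>" using W by (auto simp: local_section_def)
  have rKW: "r ` K \<subseteq> r ` W" using K(2) by auto
  have "compact (r ` K)"
    using K(1) cont_r by (meson compact_continuous_image continuous_on_subset subset_UNIV)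
  then have "compact (\<sigma> ` r ` K)"
    using continuous_on_subset[OF c\<sigma> rKW] by (rule compact_continuous_image[rotated])
  moreover have "\<sigma> ` r ` K \<subseteq> W" using rKW local_section_inverse(1)[OF W] by blast
  ultimately obtain h where "h \<in> Cc_on W" "\<And>x. x \<in> \<sigma> ` r ` K \<Longrightarrow> h x = 1"
    using Cc_bump[OF lc _ oW] by blast
  then show ?thesis using that by blast
qed

(* Induction step, locally: if C_c(G_n) \<subseteq> prod_span n, then every f of degree n+1 supported
   near an arrow of degree n+1 lies in prod_span (n+1), namely f = h * (h^* * f) for a bump h
   on an open bisection of degree one. *)
lemma local_density:
  assumes unp: "unperforated r s m c"
    and IH: "Cc_deg c (int n) \<subseteq> prod_span r m iv c n" and n: "n \<ge> 1"
    and \<gamma>: "c \<gamma> = int (Suc n)"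
  shows "\<exists>N. open N \<and> \<gamma> \<in> N \<and>
    (\<forall>f \<in> Cc_deg c (int (Suc n)). supp f \<subseteq> N \<longrightarrow> f \<in> prod_span r m iv c (Suc n))"
proof -
  obtain \<alpha> where \<alpha>: "c \<alpha> = 1" "r \<alpha> = r \<gamma>" by (rule degree_one_factor[OF unp, of \<gamma>]) (use \<gamma> in simp_all)
  obtain W \<sigma> where W: "\<alpha> \<in> W" "W \<subseteq> c -` {1}" "local_section r W \<sigma>" "inj_on s W"
    using degree_one_bisection[OF \<alpha>(1)] .
  have orW: "open (r ` W)" using W(3) by (simp add: local_section_def)
  define N where "N = r -` (r ` W)"
  have "f \<in> prod_span r m iv c (Suc n)"
    if f: "f \<in> Cc_deg c (int (Suc n))" and fN: "supp f \<subseteq> N" for f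
  proof -
    have "compact (supp f)" using f by (simp add: Cc_deg_eq_Cc_on Cc_on_def)
    then obtain h where h: "h \<in> Cc_on W" "\<And>\<gamma>. \<gamma> \<in> supp f \<Longrightarrow> h (\<sigma> (r \<gamma>)) = 1"
      using section_bump[OF W(3)] fN unfolding N_def by blast
    have h1: "h \<in> Cc_deg c 1" using h(1) W(2) by (auto simp: Cc_deg_eq_Cc_on intro: Cc_on_mono)
    have "conv r m iv (involution iv h) f \<in> Cc_deg c (int n)"
      using conv_Cc_deg[OF involution_Cc_deg[OF h1] f] by simp
    then have "conv r m iv h (conv r m iv (involution iv h) f) \<in> prod_span r m iv c (Suc n)"
      using prod_span_conv_left[OF _ n h1] IH by blast
    moreover have "conv r m iv h (conv r m iv (involution iv h) f) = f"
    proof (rule conv_section_involution[OF W(3,4)])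
      show "{x. h x \<noteq> 0} \<subseteq> W" using h(1) in_supp by (auto simp: Cc_on_def)
      show "r \<gamma>' \<in> r ` W \<and> h (\<sigma> (r \<gamma>')) = 1" if "f \<gamma>' \<noteq> 0" for \<gamma>'
        using in_supp[of f, OF that] fN h(2) by (auto simp: N_def)
    qed
    ultimately show ?thesis by simp
  qed
  moreover have "open N" unfolding N_def by (rule open_vimage_UNIV[OF cont_r orW])
  moreover have "\<gamma> \<in> N" unfolding N_def using rev_image_eqI[OF W(1), of "r \<gamma>" r] \<alpha>(2) by simp
  ultimately show ?thesis by blast
qed

lemma Cc_deg_subset_prod_span:
  assumes unp: "unperforated r s m c"
  shows "n > 0 \<Longrightarrow> Cc_deg c (int n) \<subseteq> prod_span r m iv c n"
proof (induction n)
  case (Suc n)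
  show ?case
  proof (cases "n = 0")
    case True
    then show ?thesis using prod_span_degree_one by auto
  next
    case False
    then have IH: "Cc_deg c (int n) \<subseteq> prod_span r m iv c n" and "n \<ge> 1" using Suc.IH by simp_all
    then obtain N where N: "\<And>\<gamma>. c \<gamma> = int (Suc n) \<Longrightarrow> open (N \<gamma>) \<and> \<gamma> \<in> N \<gamma> \<and>
      (\<forall>f \<in> Cc_deg c (int (Suc n)). supp f \<subseteq> N \<gamma> \<longrightarrow> f \<in> prod_span r m iv c (Suc n))"
      using local_density[OF unp] by metis
    show ?thesis
    proof
      fix f assume f: "f \<in> Cc_deg c (int (Suc n))"
      show "f \<in> prod_span r m iv c (Suc n)"
      proof (rule Cc_on_local_to_global[OF lc, where P = "\<lambda>f. f \<in> prod_span r m iv c (Suc n)"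
            and A = "c -` {int (Suc n)}" and N = N])
        show "(\<lambda>_. 0) \<in> prod_span r m iv c (Suc n)" by (rule prod_span_zero)
        show "(\<lambda>x. f1 x + f2 x) \<in> prod_span r m iv c (Suc n)"
          if "f1 \<in> prod_span r m iv c (Suc n)" "f2 \<in> prod_span r m iv c (Suc n)" for f1 f2
          using prod_span_add[OF that] .
        show "open (N x) \<and> x \<in> N x" if "x \<in> c -` {int (Suc n)}" for x
          using N that by simp
        show "g \<in> prod_span r m iv c (Suc n)"
          if "x \<in> c -` {int (Suc n)}" "g \<in> Cc_on (c -` {int (Suc n)})" "supp g \<subseteq> N x" for x g
          using N[of x] that by (simp add: Cc_deg_eq_Cc_on)
        show "f \<in> Cc_on (c -` {int (Suc n)})" using f by (simp add: Cc_deg_eq_Cc_on)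
      qed
    qed
  qed
qed simp

end

lemma inductive_limit_dense_if_subset:
  assumes "\<And>f. f \<in> T \<Longrightarrow> compact (closure {x. f x \<noteq> 0})" and "T \<subseteq> S"
  shows "inductive_limit_dense S T"
  unfolding inductive_limit_dense_def using assms by fastforce

theorem mainTheorem4:
  fixes r s iv :: "'g::{t2_space,second_countable_topology} \<Rightarrow> 'g"
    and m :: "'g \<Rightarrow> 'g \<Rightarrow> 'g"
    and c :: "'g \<Rightarrow> int"
    and n :: nat
  assumes "etale_groupoid r s m iv"
    and "cocycle r s m c"
    and "unperforated r s m c"
    and "n > 0"
  shows "prod_span r m iv c n \<subseteq> Cc_deg c (int n)
    \<and> inductive_limit_dense (prod_span r m iv c n) (Cc_deg c (int n))
    \<and> involution iv ` Cc_deg c (int n) = Cc_deg c (- int n)"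
proof -
  interpret graded_etale_groupoid r s iv m c using assms(1,2) by unfold_locales
  have "prod_span r m iv c n = Cc_deg c (int n)"
    using prod_span_subset Cc_deg_subset_prod_span[OF assms(3)] assms(4) by blast
  moreover have "inductive_limit_dense (Cc_deg c (int n)) (Cc_deg c (int n))"
    by (rule inductive_limit_dense_if_subset) (auto simp: Cc_deg_def)
  ultimately show ?thesis using involution_image by simp
qed

end
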